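(* Let $0<\lambda\le1$ and $f\in\mathcal U(\lambda)$ with $\dfrac{z}{f(z)}=1+\sum_{k=1}^\infty b_kz^k$ in $\mathbb D$. Let $n\ge2$ be an integer and define $f_n$ by $$\frac{z}{f_n(z)}=1+\sum_{k=1}^\infty b_{nk}z^{nk},\qquad z\in\mathbb D.$$ If $z/f_n(z)\ne0$ for all $z\in\mathbb D$, then $f_n\in\mathcal U(\lambda)$.
   Context: $\mathbb D=\{z\in\mathbb C:|z|<1\}$. $\mathcal A$ is the class of functions $f$ analytic in $\mathbb D$ with $f(z)=z+\sum_{k\ge2}a_kz^k$. For $f\in\mathcal A$ with $f(z)\ne0$ for $z\in\mathbb D\setminus\{0\}$, set $U_f(z)=\left(\frac{z}{f(z)}\right)^2f'(z)-1$. For $0<\lambda\le1$, $\mathcal U(\lambda)$ is the class of such $f\in\mathcal A$ with $|U_f(z)|<\lambda$ for all $z\in\mathbb D$. *)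

theory Defs
  imports "HOL-Complex_Analysis.Complex_Analysis"
begin

definition classA :: "(complex \<Rightarrow> complex) \<Rightarrow> bool" where
  "classA f \<longleftrightarrow> f holomorphic_on ball 0 1 \<and> f 0 = 0 \<and> deriv f 0 = 1"

text \<open>z / f(z), extended to z = 0 by its limit 1 / f'(0) (= 1 for f in class A).\<close>
definition zdivf :: "(complex \<Rightarrow> complex) \<Rightarrow> complex \<Rightarrow> complex" where
  "zdivf f z = (if z = 0 then 1 / deriv f 0 else z / f z)"

definition Uf :: "(complex \<Rightarrow> complex) \<Rightarrow> complex \<Rightarrow> complex" where
  "Uf f z = (zdivf f z)\<^sup>2 * deriv f z - 1"

definition classU :: "real \<Rightarrow> (complex \<Rightarrow> complex) \<Rightarrow> bool" where
  "classU lam f \<longleftrightarrow> classA f \<and> (\<forall>z\<in>ball 0 1 - {0}. f z \<noteq> 0)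
     \<and> (\<forall>z\<in>ball 0 1. cmod (Uf f z) < lam)"

definition bcoeff :: "(complex \<Rightarrow> complex) \<Rightarrow> nat \<Rightarrow> complex" where
  "bcoeff f k = (deriv ^^ k) (zdivf f) 0 / fact k"

end

theory Submission
  imports Defs
begin

text \<open>Write \<open>g = z / f\<close>, so that \<open>U\<^sub>f = g - z g' - 1\<close>, an operator commuting with the rotations
  \<open>z \<mapsto> \<omega> z\<close>. Averaging \<open>g\<close> over the \<open>n\<close>-th roots of unity \<open>\<omega>\<close> kills every Taylor coefficient
  whose index is not a multiple of \<open>n\<close>, so the average is \<open>z / f\<^sub>n\<close>; hence \<open>U\<^sub>f\<^sub>n\<close> is the average
  of \<open>U\<^sub>f\<close> over the rotated points, and the triangle inequality keeps it below \<open>\<lambda>\<close>.\<close>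

definition root_of_unity :: "nat \<Rightarrow> complex" where
  "root_of_unity n = exp (2 * of_real pi * \<i> / of_nat n)"

definition rotation_mean :: "nat \<Rightarrow> (complex \<Rightarrow> complex) \<Rightarrow> complex \<Rightarrow> complex" where
  "rotation_mean n g z = (\<Sum>j<n. g (root_of_unity n ^ j * z)) / of_nat n"

lemma norm_root_of_unity [simp]: "norm (root_of_unity n) = 1"
  by (simp add: root_of_unity_def norm_exp_eq_Re)

lemma rotation_in_ball: "z \<in> ball 0 r \<Longrightarrow> root_of_unity n ^ j * z \<in> ball 0 r"
  by (simp add: norm_mult norm_power)

lemma sum_root_of_unity_powers:
  assumes "n \<ge> 1"
  shows "(\<Sum>j<n. (root_of_unity n ^ j) ^ m) = (if n dvd m then of_nat n else 0)"
proof -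
  define \<omega> where "\<omega> = root_of_unity n"
  have "\<omega> ^ k = exp (2 * of_real pi * \<i> * of_nat k / of_nat n)" for k
    unfolding \<omega>_def root_of_unity_def by (simp add: exp_of_nat_mult[symmetric] algebra_simps)
  then have power_eq_1: "\<omega> ^ k = 1 \<longleftrightarrow> n dvd k" for k
    using complex_root_unity_eq_1[OF assms] by simp
  have "(\<Sum>j<n. (\<omega> ^ j) ^ m) = (\<Sum>j<n. (\<omega> ^ m) ^ j)"
    by (simp add: power_mult[symmetric] mult.commute)
  also have "\<dots> = (if n dvd m then of_nat n else 0)"
  proof (cases "n dvd m")
    case True
    then have "\<omega> ^ m = 1" using power_eq_1 by simp
    then show ?thesis using True by simp
  next
    case False
    have "(\<omega> ^ m) ^ n = 1"
      by (metis power_eq_1 dvd_refl power_mult mult.commute power_one)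
    then show ?thesis using False power_eq_1 sum_gp_strict[of "\<omega> ^ m" n] by simp
  qed
  finally show ?thesis unfolding \<omega>_def .
qed

lemma sums_rotation_mean:
  assumes "n > 0" and series: "\<And>w. w \<in> ball 0 r \<Longrightarrow> (\<lambda>m. a m * w ^ m) sums g w"
    and z: "z \<in> ball 0 r"
  shows "(\<lambda>k. a (n * k) * z ^ (n * k)) sums rotation_mean n g z"
proof -
  define c where "c = (\<lambda>m. if n dvd m then a m * z ^ m else 0)"
  have "(\<Sum>j<n. a m * (root_of_unity n ^ j * z) ^ m) / of_nat n = c m" for m
  proof -
    have "(\<Sum>j<n. a m * (root_of_unity n ^ j * z) ^ m)
        = a m * z ^ m * (\<Sum>j<n. (root_of_unity n ^ j) ^ m)"
      by (simp add: sum_distrib_left power_mult_distrib algebra_simps)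
    then show ?thesis
      using sum_root_of_unity_powers[of n m] \<open>n > 0\<close> by (simp add: c_def)
  qed
  moreover have "(\<lambda>m. (\<Sum>j<n. a m * (root_of_unity n ^ j * z) ^ m) / of_nat n)
      sums rotation_mean n g z"
    unfolding rotation_mean_def by (intro sums_divide sums_sum series rotation_in_ball z)
  ultimately have "c sums rotation_mean n g z" by simp
  then have "(\<lambda>k. c (n * k)) sums rotation_mean n g z"
    by (subst sums_mono_reindex) (auto simp: strict_mono_def c_def \<open>n > 0\<close>)
  then show ?thesis by (simp add: c_def)
qed

lemma sums_rotation_mean_taylor:
  assumes "n > 0" and hol: "g holomorphic_on ball 0 r" and z: "z \<in> ball 0 r"
  shows "(\<lambda>k. (deriv ^^ (n * Suc k)) g 0 / fact (n * Suc k) * z ^ (n * Suc k))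
           sums (rotation_mean n g z - g 0)"
proof -
  have "(\<lambda>k. (deriv ^^ (n * k)) g 0 / fact (n * k) * z ^ (n * k)) sums rotation_mean n g z"
    using holomorphic_power_series[OF hol] by (intro sums_rotation_mean[OF \<open>n > 0\<close> _ z]) simp
  then show ?thesis
    using sums_Suc_iff[of "\<lambda>k. (deriv ^^ (n * k)) g 0 / fact (n * k) * z ^ (n * k)"] by simp
qed

lemma has_field_derivative_rotation_mean:
  assumes hol: "g holomorphic_on ball 0 r" and z: "z \<in> ball 0 r"
  shows "(rotation_mean n g has_field_derivative
           (\<Sum>j<n. deriv g (root_of_unity n ^ j * z) * root_of_unity n ^ j) / of_nat n) (at z)"
proof -
  have "((\<lambda>z. g (root_of_unity n ^ j * z)) has_field_derivative
          deriv g (root_of_unity n ^ j * z) * root_of_unity n ^ j) (at z)" for j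
  proof (rule DERIV_chain2[of g])
    show "(g has_field_derivative deriv g (root_of_unity n ^ j * z)) (at (root_of_unity n ^ j * z))"
      using z by (intro holomorphic_derivI[OF hol open_ball] rotation_in_ball)
  qed (auto intro!: derivative_eq_intros)
  then show ?thesis
    unfolding rotation_mean_def by (intro DERIV_cdivide DERIV_sum) auto
qed

lemma holomorphic_rotation_mean:
  "g holomorphic_on ball 0 r \<Longrightarrow> rotation_mean n g holomorphic_on ball 0 r"
  using has_field_derivative_rotation_mean holomorphic_on_open[OF open_ball] by blast

lemma deriv_rotation_mean:
  assumes "g holomorphic_on ball 0 r" and "z \<in> ball 0 r"
  shows "z * deriv (rotation_mean n g) z = rotation_mean n (\<lambda>w. w * deriv g w) z"
  using DERIV_imp_deriv[OF has_field_derivative_rotation_mean[OF assms]]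
  by (simp add: rotation_mean_def sum_distrib_left algebra_simps)

lemma norm_rotation_mean_less:
  assumes "n > 0" and "\<And>w. w \<in> ball 0 r \<Longrightarrow> norm (F w) < c" and z: "z \<in> ball 0 r"
  shows "norm (rotation_mean n F z) < c"
proof -
  have "norm (rotation_mean n F z) \<le> (\<Sum>j<n. norm (F (root_of_unity n ^ j * z))) / real n"
    unfolding rotation_mean_def by (simp add: norm_divide divide_right_mono norm_sum)
  also have "\<dots> < (\<Sum>j<n. c) / real n"
    using assms rotation_in_ball[OF z] by (intro divide_strict_right_mono sum_strict_mono) auto
  also have "\<dots> = c" using \<open>n > 0\<close> by simp
  finally show ?thesis .
qed

lemma holomorphic_zdivf:
  assumes "classA f" and nonzero: "\<forall>z\<in>ball 0 1 - {0}. f z \<noteq> 0"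
  shows "zdivf f holomorphic_on ball 0 1"
proof -
  have hf: "f holomorphic_on ball 0 1" and "f 0 = 0" and "deriv f 0 = 1"
    using assms(1) by (auto simp: classA_def)
  have "(\<lambda>z. z / f z) holomorphic_on ball 0 1 - {0}"
    using nonzero by (intro holomorphic_intros holomorphic_on_subset[OF hf]) auto
  then have off_0: "zdivf f holomorphic_on ball 0 1 - {0}"
    by (rule holomorphic_transform) (auto simp: zdivf_def)
  have "(f has_field_derivative 1) (at 0)"
    using holomorphic_derivI[OF hf open_ball, of 0] \<open>deriv f 0 = 1\<close> by simp
  then have "((\<lambda>y. inverse (f y / y)) \<longlongrightarrow> inverse 1) (at 0)"
    using \<open>f 0 = 0\<close> by (intro tendsto_inverse) (auto simp: has_field_derivative_iff)
  then have "((\<lambda>y. y / f y) \<longlongrightarrow> zdivf f 0) (at 0)"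
    using \<open>deriv f 0 = 1\<close> by (simp add: zdivf_def)
  moreover have "eventually (\<lambda>y. y / f y = zdivf f y) (at 0)"
    by (auto simp: eventually_at_filter zdivf_def)
  ultimately have "(zdivf f \<longlongrightarrow> zdivf f 0) (at 0 within ball 0 1)"
    by (auto intro: Lim_at_imp_Lim_at_within simp: tendsto_cong)
  then show ?thesis
    by (intro no_isolated_singularity'[where K="{0}", OF _ off_0]) auto
qed

lemma Uf_eq_zdivf:
  assumes "classA f" and nonzero: "\<forall>z\<in>ball 0 1 - {0}. f z \<noteq> 0" and w: "w \<in> ball 0 1"
  shows "Uf f w = zdivf f w - w * deriv (zdivf f) w - 1"
proof (cases "w = 0")
  case True
  then show ?thesis using assms(1) by (simp add: Uf_def zdivf_def classA_def)
next
  case False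
  have hf: "f holomorphic_on ball 0 1" using assms(1) by (simp add: classA_def)
  have fw: "f w \<noteq> 0" using nonzero w False by auto
  have "((\<lambda>z. z / f z) has_field_derivative (1 * f w - w * deriv f w) / (f w * f w)) (at w)"
    using fw by (intro DERIV_divide DERIV_ident holomorphic_derivI[OF hf open_ball w])
  then have "(zdivf f has_field_derivative (1 * f w - w * deriv f w) / (f w * f w)) (at w)"
    by (rule has_field_derivative_transform_within_open[of _ _ _ "ball 0 1 - {0}"])
       (use w False in \<open>auto simp: zdivf_def\<close>)
  then have "deriv (zdivf f) w = (f w - w * deriv f w) / (f w * f w)"
    by (simp add: DERIV_imp_deriv)
  moreover have "zdivf f w = w / f w" using False by (simp add: zdivf_def)
  ultimately show ?thesis
    using fw by (simp only: Uf_def) (simp add: field_simps power2_eq_square)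
qed

lemma classA_div:
  assumes hol: "G holomorphic_on ball 0 1" and nonzero: "\<forall>z\<in>ball 0 1. G z \<noteq> 0"
    and "G 0 = 1"
  shows "classA (\<lambda>z. z / G z)"
proof -
  have "((\<lambda>z. z / G z) has_field_derivative (1 * G 0 - 0 * deriv G 0) / (G 0 * G 0)) (at 0)"
    using nonzero by (intro DERIV_divide DERIV_ident holomorphic_derivI[OF hol open_ball]) auto
  then have "deriv (\<lambda>z. z / G z) 0 = 1"
    using \<open>G 0 = 1\<close> by (simp add: DERIV_imp_deriv)
  then show ?thesis
    unfolding classA_def using nonzero by (auto intro!: holomorphic_intros hol)
qed

lemma zdivf_div:
  assumes "G holomorphic_on ball 0 1" and "\<forall>z\<in>ball 0 1. G z \<noteq> 0" and "G 0 = 1"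
    and "z \<in> ball 0 1"
  shows "zdivf (\<lambda>z. z / G z) z = G z"
  using classA_div[OF assms(1-3)] assms(2-4) by (auto simp: zdivf_def classA_def)

lemma Uf_div:
  assumes hol: "G holomorphic_on ball 0 1" and nonzero: "\<forall>z\<in>ball 0 1. G z \<noteq> 0"
    and "G 0 = 1" and z: "z \<in> ball 0 1"
  shows "Uf (\<lambda>z. z / G z) z = G z - z * deriv G z - 1"
proof -
  have "deriv (zdivf (\<lambda>z. z / G z)) z = deriv G z"
    using zdivf_div[OF hol nonzero \<open>G 0 = 1\<close>] z
    by (intro deriv_cong_ev) (auto simp: eventually_nhds intro!: exI[of _ "ball 0 1"])
  then show ?thesis
    using Uf_eq_zdivf[OF classA_div[OF assms(1-3)] _ z] zdivf_div[OF assms] nonzero by simp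
qed

lemma classU_div_rotation_mean:
  assumes "classU lam f" and n: "n > 0"
    and G_eq: "\<forall>z\<in>ball 0 1. G z = rotation_mean n (zdivf f) z"
    and G_nonzero: "\<forall>z\<in>ball 0 1. G z \<noteq> 0"
  shows "classU lam (\<lambda>z. z / G z)"
proof -
  define g where "g = zdivf f"
  have f: "classA f" "\<forall>z\<in>ball 0 1 - {0}. f z \<noteq> 0" "\<forall>z\<in>ball 0 1. norm (Uf f z) < lam"
    using \<open>classU lam f\<close> by (auto simp: classU_def)
  have g: "g holomorphic_on ball 0 1" "g 0 = 1"
    using holomorphic_zdivf[OF f(1,2)] f(1) by (auto simp: g_def zdivf_def classA_def)
  have G_hol: "G holomorphic_on ball 0 1"
    using holomorphic_transform[OF holomorphic_rotation_mean[OF g(1)]] G_eq by (metis g_def)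
  have G_0: "G 0 = 1"
    using G_eq g(2) n by (simp add: rotation_mean_def g_def)
  note G = G_hol G_nonzero G_0
  have "norm (Uf (\<lambda>z. z / G z) z) < lam" if z: "z \<in> ball 0 1" for z
  proof -
    have "Uf (\<lambda>z. z / G z) z = G z - z * deriv G z - 1"
      by (rule Uf_div[OF G z])
    also have "\<dots> = rotation_mean n g z - rotation_mean n (\<lambda>w. w * deriv g w) z - 1"
      using complex_derivative_transform_within_open[OF G_hol holomorphic_rotation_mean[OF g(1)]]
        deriv_rotation_mean[OF g(1) z] G_eq z by (simp add: g_def)
    also have "\<dots> = rotation_mean n (\<lambda>w. g w - w * deriv g w - 1) z"
      using n by (simp add: rotation_mean_def sum_subtractf diff_divide_distrib)
    also have "\<dots> = rotation_mean n (Uf f) z"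
      unfolding rotation_mean_def g_def
      by (intro arg_cong2[where f="(/)"] sum.cong refl Uf_eq_zdivf[symmetric] f rotation_in_ball z)
    finally show ?thesis
      using norm_rotation_mean_less[OF n _ z] f(3) by simp
  qed
  then show ?thesis
    using classA_div[OF G] G_nonzero by (auto simp: classU_def)
qed

theorem theorem5p3:
  fixes lam :: real and f :: "complex \<Rightarrow> complex" and n :: nat
  assumes "0 < lam" and "lam \<le> 1"
    and "classU lam f"
    and "n \<ge> 2"
    and "\<forall>z\<in>ball 0 1. 1 + (\<Sum>k. bcoeff f (n * Suc k) * z ^ (n * Suc k)) \<noteq> 0"
  shows "classU lam (\<lambda>z. z / (1 + (\<Sum>k. bcoeff f (n * Suc k) * z ^ (n * Suc k))))"
proof (rule classU_div_rotation_mean[OF \<open>classU lam f\<close>])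
  show n: "n > 0" using \<open>n \<ge> 2\<close> by simp
  have "classA f" "\<forall>z\<in>ball 0 1 - {0}. f z \<noteq> 0"
    using \<open>classU lam f\<close> by (auto simp: classU_def)
  then have "zdivf f holomorphic_on ball 0 1" "zdivf f 0 = 1"
    using holomorphic_zdivf by (auto simp: zdivf_def classA_def)
  then show "\<forall>z\<in>ball 0 1. 1 + (\<Sum>k. bcoeff f (n * Suc k) * z ^ (n * Suc k))
               = rotation_mean n (zdivf f) z"
    using sums_rotation_mean_taylor[OF n] by (simp add: bcoeff_def sums_iff)
qed (use assms(5) in simp)

end
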